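(* If $n\ge 3t+1$, then in every execution of COOL all honest processors output the same message (consistency).
   Context: Setting. $n$ processors indexed by $[1:n]$, pairwise joined by reliable private synchronous channels; recipients know senders. At most $t$ processors are dishonest, controlled by a Byzantine adversary of unbounded computational power knowing all inputs, who may make them deviate arbitrarily (missing values are replaced by a fixed default); the others are honest. Processor $i$ holds an $\ell$-bit initial message $\boldsymbol w_i$. $\phi$ is a default value different from every $\ell$-bit message. Logarithms are base 2. Code. $k=\lfloor t/5\rfloor+1$, $c=\lceil \max\{\ell,(t/5+1)\log(n+1)\}/k\rceil$. Messages are zero-padded to $kc$ bits and viewed in $GF(2^c)^k$. Integers in $[1:n]$ are identified with distinct nonzero elements of $GF(2^c)$; $\boldsymbol h_i\in GF(2^c)^k$ has entries $h_{i,j}=\prod_{p\in[1:k],\,p\ne j}\frac{i-p}{j-p}$ (field arithmetic). COOL (honest processor $i$). Initialization: updated message $\boldsymbol w^{(i)}:=\boldsymbol w_i$, $y^{(i)}_j:=\boldsymbol h_j^{\mathsf T}\boldsymbol w_i$ for $j\in[1:n]$, $u_i(i):=1$. Phase 1. (a) Send $(y^{(i)}_j,y^{(i)}_i)$ to each $j\ne i$. (b) For $j\ne i$, link indicator $u_i(j):=1$ if the pair received from $j$ equals $(y^{(i)}_i,y^{(i)}_j)$, else $0$. Success indicator $s_i:=1$ if $\sum_{j=1}^n u_i(j)\ge n-t$; otherwise $s_i:=0$ and $\boldsymbol w^{(i)}:=\phi$. (c) Send $s_i$ to all; each processor records the indicator received from each $j$ (own for itself) and forms $\mathcal S_1=\{j:s_j=1\}$,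 $\mathcal S_0=\{j:s_j=0\}$ (views may differ). Phase 2. If $s_i=1$: set $u_i(j):=0$ for all $j\in\mathcal S_0$; if now $\sum_j u_i(j)<n-t$, set $s_i:=0$, $\boldsymbol w^{(i)}:=\phi$, and send $s_i=0$ to all. Everyone overwrites recorded indicators with newly received ones and recomputes $\mathcal S_0,\mathcal S_1$. Phase 3. Repeat Phase 2 once more. Vote $v_i:=1$ if the recorded indicators satisfy $\sum_j s_j\ge 2t+1$, else $0$. Run on the votes a deterministic error-free binary Byzantine agreement protocol for $t<n/3$ (e.g. Berman–Garay–Perry or Coan–Welch), which guarantees all honest processors decide, decide equally, and decide the common honest vote when all honest votes agree. If the decision is $0$: set $\boldsymbol w^{(i)}:=\phi$, output $\phi$, stop. Phase 4 (decision 1). If $s_i=0$: replace $y^{(i)}_i$ by the most frequent value (fixed tie-breaking) among the first components of the Phase-1 pairs received from $j\in\mathcal S_1$; send it to each $j\in\mathcal S_0\setminus\{i\}$; with $z_i=y^{(i)}_i$, $z_j$ = value received from $j$ in Phase 4 for $j\in\mathcal S_0\setminus\{i\}$, $z_j$ = second component of the Phase-1 pair from $j$ for $j\in\mathcal S_1$, set $\boldsymbol w^{(i)}$ to a message $\boldsymbol x$ with $\boldsymbol h_j^{\mathsf T}\boldsymbol x=z_j$ for at least $n-t$ indices $j$ ($\phi$ if none). If $s_i=1$ keep $\boldsymbol w^{(i)}$. Output $\boldsymbol w^{(i)}$ and stop. *)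

theory Defs
  imports Complex_Main
begin

definition kpar :: "nat \<Rightarrow> nat" where
  "kpar t = t div 5 + 1"

definition cpar :: "nat \<Rightarrow> nat \<Rightarrow> nat \<Rightarrow> nat" where
  "cpar n t l = nat \<lceil> max (real l) ((real t / 5 + 1) * log 2 (real n + 1)) / real (kpar t) \<rceil>"

text \<open>Lagrange coefficients h_{i,j}; emb identifies integers with field elements.\<close>
definition hcoef :: "(nat \<Rightarrow> 'f::field) \<Rightarrow> nat \<Rightarrow> nat \<Rightarrow> nat \<Rightarrow> 'f" where
  "hcoef emb k i j = (\<Prod>p\<in>{1..k} - {j}. (emb i - emb p) / (emb j - emb p))"

text \<open>Coded symbol h_i^T x, vectors of GF(2^c)^k are lists of length k (entry j is x!(j-1)).\<close>
definition cw :: "(nat \<Rightarrow> 'f::field) \<Rightarrow> nat \<Rightarrow> 'f list \<Rightarrow> nat \<Rightarrow> 'f" where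
  "cw emb k x i = (\<Sum>j\<in>{1..k}. hcoef emb k i j * x ! (j - 1))"

definition encode_msg :: "(bool list \<Rightarrow> 'f) \<Rightarrow> nat \<Rightarrow> nat \<Rightarrow> bool list \<Rightarrow> 'f list" where
  "encode_msg b2f k c w =
     map (\<lambda>p. b2f (take c (drop (p * c) (w @ replicate (k * c - length w) False)))) [0..<k]"

section \<open>Adversary: values sent by dishonest processors (sender, recipient)\<close>

record 'f adversary =
  ph1  :: "nat \<Rightarrow> nat \<Rightarrow> 'f \<times> 'f"
  ph1s :: "nat \<Rightarrow> nat \<Rightarrow> bool"
  ph2  :: "nat \<Rightarrow> nat \<Rightarrow> bool option"   \<comment> \<open>Phase 2 indicator (None = nothing sent)\<close>
  ph3  :: "nat \<Rightarrow> nat \<Rightarrow> bool option"   \<comment> \<open>Phase 3 indicator (None = nothing sent)\<close>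
  ph4  :: "nat \<Rightarrow> nat \<Rightarrow> 'f"

definition valid_tb :: "('f set \<Rightarrow> 'f) \<Rightarrow> bool" where
  "valid_tb tb \<longleftrightarrow> (\<forall>A. A \<noteq> {} \<longrightarrow> tb A \<in> A)"

definition valid_decoder ::
  "(nat \<Rightarrow> 'f::field) \<Rightarrow> nat \<Rightarrow> nat \<Rightarrow> (nat \<Rightarrow> (nat \<Rightarrow> 'f) \<Rightarrow> 'f list option) \<Rightarrow> bool" where
  "valid_decoder emb n t dec \<longleftrightarrow>
     (\<forall>i z. (if \<exists>x. length x = kpar t \<and> card {j\<in>{1..n}. cw emb (kpar t) x j = z j} \<ge> n - t
             then (\<exists>x. dec i z = Some x \<and> length x = kpar t \<and>
                        card {j\<in>{1..n}. cw emb (kpar t) x j = z j} \<ge> n - t)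
             else dec i z = None))"

text \<open>W i: updated message initialisation (encoded input of processor i); B: dishonest set;
  dflt: default value for missing values; tb: tie-breaking; d: BA decision; dec: decoder.
  phi is represented by None.\<close>

locale cool_exec =
  fixes n t :: nat and emb :: "nat \<Rightarrow> 'f::field" and B :: "nat set"
    and W :: "nat \<Rightarrow> 'f list" and adv :: "'f adversary" and dflt :: 'f
    and tb :: "'f set \<Rightarrow> 'f"
begin

definition k :: nat where "k = kpar t"

definition recv1 :: "nat \<Rightarrow> nat \<Rightarrow> 'f \<times> 'f" where
  "recv1 i j = (if j \<in> B then ph1 adv j i else (cw emb k (W j) i, cw emb k (W j) j))"

definition link1 :: "nat \<Rightarrow> nat \<Rightarrow> bool" where
  "link1 i j \<longleftrightarrow> j = i \<or> recv1 i j = (cw emb k (W i) i, cw emb k (W i) j)"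

definition s1 :: "nat \<Rightarrow> bool" where
  "s1 i \<longleftrightarrow> card {j\<in>{1..n}. link1 i j} \<ge> n - t"

definition rec1 :: "nat \<Rightarrow> nat \<Rightarrow> bool" where
  "rec1 i j = (if j = i then s1 i else if j \<in> B then ph1s adv j i else s1 j)"

definition link2 :: "nat \<Rightarrow> nat \<Rightarrow> bool" where
  "link2 i j \<longleftrightarrow> link1 i j \<and> rec1 i j"

definition s2 :: "nat \<Rightarrow> bool" where
  "s2 i \<longleftrightarrow> s1 i \<and> card {j\<in>{1..n}. link2 i j} \<ge> n - t"

definition msg2 :: "nat \<Rightarrow> nat \<Rightarrow> bool option" where
  "msg2 j i = (if j \<in> B then ph2 adv j i else if s1 j \<and> \<not> s2 j then Some False else None)"

definition rec2 :: "nat \<Rightarrow> nat \<Rightarrow> bool" where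
  "rec2 i j = (if j = i then s2 i else (case msg2 j i of None \<Rightarrow> rec1 i j | Some b \<Rightarrow> b))"

definition link3 :: "nat \<Rightarrow> nat \<Rightarrow> bool" where
  "link3 i j \<longleftrightarrow> link2 i j \<and> rec2 i j"

definition s3 :: "nat \<Rightarrow> bool" where
  "s3 i \<longleftrightarrow> s2 i \<and> card {j\<in>{1..n}. link3 i j} \<ge> n - t"

definition msg3 :: "nat \<Rightarrow> nat \<Rightarrow> bool option" where
  "msg3 j i = (if j \<in> B then ph3 adv j i else if s2 j \<and> \<not> s3 j then Some False else None)"

definition rec3 :: "nat \<Rightarrow> nat \<Rightarrow> bool" where
  "rec3 i j = (if j = i then s3 i else (case msg3 j i of None \<Rightarrow> rec2 i j | Some b \<Rightarrow> b))"

definition vote :: "nat \<Rightarrow> bool" where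
  "vote i \<longleftrightarrow> card {j\<in>{1..n}. rec3 i j} \<ge> 2 * t + 1"

definition S1view :: "nat \<Rightarrow> nat set" where
  "S1view i = {j\<in>{1..n}. rec3 i j}"

definition freq :: "nat \<Rightarrow> 'f \<Rightarrow> nat" where
  "freq i v = card {j\<in>S1view i. fst (recv1 i j) = v}"

definition modes :: "nat \<Rightarrow> 'f set" where
  "modes i = {v. (\<exists>j\<in>S1view i. fst (recv1 i j) = v) \<and> (\<forall>v'. freq i v' \<le> freq i v)}"

definition ynew :: "nat \<Rightarrow> 'f" where
  "ynew i = tb (modes i)"

text \<open>Value received by i from j in Phase 4 (dflt if nothing is sent).\<close>
definition recv4 :: "nat \<Rightarrow> nat \<Rightarrow> 'f" where
  "recv4 i j = (if j \<in> B then ph4 adv j i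
               else if \<not> s3 j \<and> \<not> rec3 j i then ynew j else dflt)"

definition zvec :: "nat \<Rightarrow> nat \<Rightarrow> 'f" where
  "zvec i j = (if j = i then ynew i else if \<not> rec3 i j then recv4 i j else snd (recv1 i j))"

definition cool_output :: "bool \<Rightarrow> (nat \<Rightarrow> (nat \<Rightarrow> 'f) \<Rightarrow> 'f list option) \<Rightarrow> nat \<Rightarrow> 'f list option" where
  "cool_output d dec i = (if \<not> d then None else if s3 i then Some (W i) else dec i (zvec i))"

end

end

theory Submission
  imports Defs "HOL-Computational_Algebra.Polynomial"
begin

(*
  The symbols h_j^T x are the values at the points emb j of the polynomial of degree < k
  interpolating x at emb 1, ..., emb k, so the codewords of two distinct messages agree in at
  most k - 1 <= t/5 positions.  Let H be the set of honest processors.  At most two distinct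
  messages are held by honest processors with s = 1 after Phase 1: three messages would need
  three sets of at least |H| - t honest supporters pairwise overlapping in at most t/5 processors.
  An honest processor still successful after Phase 3 is linked to |H| - t honest processors
  successful after Phase 2; one of them lies outside the agreement set of the two messages, so it
  holds the same message and so do all its honest links.  Thus every message held with s = 1
  after Phase 3 has |H| - t honest supporters, and two such messages cannot coexist.
  If BA decides 1, some honest processor voted 1, so at least t + 1 honest processors hold this
  common message w with s = 1.  They outvote the dishonest processors in Phase 4, so every honest
  processor with s = 0 learns its own symbol of w and then sees the correct symbol of w from all
  |H| >= n - t honest processors.  Any x that the decoder may return agrees with w in at least
  n - 2t > k - 1 positions, hence x = w.
*)

subsection \<open>Distinct codewords agree in fewer than k positions\<close>

definition lagrange_basis :: "(nat \<Rightarrow> 'f::field) \<Rightarrow> nat \<Rightarrow> nat \<Rightarrow> 'f poly" where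
  "lagrange_basis emb k j = (\<Prod>p\<in>{1..k} - {j}. smult (1 / (emb j - emb p)) [:- emb p, 1:])"

lemma poly_lagrange_basis: "poly (lagrange_basis emb k j) (emb i) = hcoef emb k i j"
  unfolding lagrange_basis_def hcoef_def poly_prod by (simp add: diff_divide_distrib)

lemma degree_lagrange_basis_le:
  assumes "j \<in> {1..k}"
  shows "degree (lagrange_basis emb k j) \<le> k - 1"
proof -
  have "degree (lagrange_basis emb k j)
      \<le> sum (degree \<circ> (\<lambda>p. smult (1 / (emb j - emb p)) [:- emb p, 1:])) ({1..k} - {j})"
    unfolding lagrange_basis_def by (rule degree_prod_sum_le) simp
  also have "\<dots> \<le> (\<Sum>p\<in>{1..k} - {j}. 1)"
    by (intro sum_mono) (simp add: degree_smult_le)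
  also have "\<dots> = k - 1"
    using assms by simp
  finally show ?thesis .
qed

lemma hcoef_diagonal:
  assumes "inj_on emb {1..k}" and "i \<in> {1..k}" and "j \<in> {1..k}"
  shows "hcoef emb k i j = (if i = j then 1 else 0)"
proof (cases "i = j")
  case True
  have "emb j \<noteq> emb p" if "p \<in> {1..k} - {j}" for p
    using assms that by (auto dest: inj_onD)
  then show ?thesis
    unfolding hcoef_def using True by (simp add: prod.neutral)
next
  case False
  then show ?thesis
    unfolding hcoef_def using assms(2) by (intro trans[OF prod_zero]) auto
qed

lemma card_cw_agree_le:
  fixes emb :: "nat \<Rightarrow> 'f::field"
  assumes inj: "inj_on emb {1..n}" and "k \<le> n"
    and "length x = k" and "length y = k" and "x \<noteq> y"
  shows "card {r\<in>{1..n}. cw emb k x r = cw emb k y r} \<le> k - 1"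
proof -
  define P where "P = (\<Sum>j\<in>{1..k}. smult (x ! (j - 1) - y ! (j - 1)) (lagrange_basis emb k j))"
  have poly_P: "poly P (emb r) = cw emb k x r - cw emb k y r" for r
    unfolding P_def cw_def poly_sum
    by (simp add: poly_lagrange_basis algebra_simps sum_subtractf)
  have "degree P \<le> k - 1"
    unfolding P_def
    by (intro degree_sum_le)
      (use degree_lagrange_basis_le in \<open>auto intro!: order.trans[OF degree_smult_le]\<close>)
  obtain j where j: "j < k" "x ! j \<noteq> y ! j"
    using assms(3-5) nth_equalityI by metis
  have inj_k: "inj_on emb {1..k}"
    using inj \<open>k \<le> n\<close> by (auto intro: inj_on_subset)
  have "poly P (emb (Suc j)) = (\<Sum>q\<in>{1..k}. hcoef emb k (Suc j) q * (x ! (q - 1) - y ! (q - 1)))"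
    unfolding poly_P cw_def by (simp add: algebra_simps sum_subtractf)
  also have "\<dots> = (\<Sum>q\<in>{1..k}. if q = Suc j then x ! (q - 1) - y ! (q - 1) else 0)"
    using j by (intro sum.cong refl) (simp add: hcoef_diagonal[OF inj_k])
  also have "\<dots> = x ! j - y ! j"
    using j by simp
  finally have "P \<noteq> 0"
    using j by auto
  have "card {r\<in>{1..n}. cw emb k x r = cw emb k y r}
      = card (emb ` {r\<in>{1..n}. cw emb k x r = cw emb k y r})"
    by (rule card_image[symmetric]) (auto intro: inj_on_subset[OF inj])
  also have "\<dots> \<le> card {a. poly P a = 0}"
    by (intro card_mono poly_roots_finite \<open>P \<noteq> 0\<close>) (auto simp: poly_P)
  also have "\<dots> \<le> degree P"
    by (rule card_poly_roots_bound[OF \<open>P \<noteq> 0\<close>])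
  finally show ?thesis
    using \<open>degree P \<le> k - 1\<close> by simp
qed

lemma valid_decoder_unique:
  fixes emb :: "nat \<Rightarrow> 'f::field"
  assumes dec: "valid_decoder emb n t dec" and inj: "inj_on emb {1..n}"
    and n: "3 * t + 1 \<le> n"
    and x: "length x = kpar t" "n - t \<le> card {j\<in>{1..n}. cw emb (kpar t) x j = z j}"
  shows "dec i z = Some x"
proof -
  have "\<exists>x. length x = kpar t \<and> n - t \<le> card {j\<in>{1..n}. cw emb (kpar t) x j = z j}"
    using x by blast
  then obtain x' where x': "dec i z = Some x'" "length x' = kpar t"
      "n - t \<le> card {j\<in>{1..n}. cw emb (kpar t) x' j = z j}"
    using dec[unfolded valid_decoder_def, rule_format, where i = i and z = z] by auto
  define A where "A = {j\<in>{1..n}. cw emb (kpar t) x j = z j}"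
  define A' where "A' = {j\<in>{1..n}. cw emb (kpar t) x' j = z j}"
  have "x = x'"
  proof (rule ccontr)
    assume "x \<noteq> x'"
    have "t div 5 \<le> t"
      by simp
    then have "kpar t \<le> n"
      using n unfolding kpar_def by linarith
    have "card A + card A' = card (A \<union> A') + card (A \<inter> A')"
      by (rule card_Un_Int) (simp_all add: A_def A'_def)
    moreover have "card (A \<union> A') \<le> n"
    proof -
      have "card (A \<union> A') \<le> card {1..n}"
        by (intro card_mono) (auto simp: A_def A'_def)
      then show ?thesis
        by simp
    qed
    moreover have "card (A \<inter> A') \<le> card {j\<in>{1..n}. cw emb (kpar t) x j = cw emb (kpar t) x' j}"
      by (intro card_mono) (auto simp: A_def A'_def)
    moreover have "\<dots> \<le> t div 5"
      using card_cw_agree_le[OF inj \<open>kpar t \<le> n\<close> x(1) x'(2) \<open>x \<noteq> x'\<close>] by (simp add: kpar_def)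
    ultimately show False
      using x(2) x'(3) n \<open>t div 5 \<le> t\<close> unfolding A_def A'_def by linarith
  qed
  with x' show ?thesis
    by simp
qed

lemma card3_le_card_Un3_add_Int:
  assumes "finite A1" "finite A2" "finite A3"
  shows "card A1 + card A2 + card A3
    \<le> card (A1 \<union> A2 \<union> A3) + card (A1 \<inter> A2) + card (A1 \<inter> A3) + card (A2 \<inter> A3)"
proof -
  have "card A1 + card A2 = card (A1 \<union> A2) + card (A1 \<inter> A2)"
    using assms by (intro card_Un_Int)
  moreover have "card (A1 \<union> A2) + card A3 = card (A1 \<union> A2 \<union> A3) + card ((A1 \<union> A2) \<inter> A3)"
    using assms by (intro card_Un_Int) simp_all
  moreover have "card ((A1 \<union> A2) \<inter> A3) \<le> card (A1 \<inter> A3) + card (A2 \<inter> A3)"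
    by (metis Int_Un_distrib2 card_Un_le)
  ultimately show ?thesis
    by linarith
qed

subsection \<open>Executions with at most t dishonest processors\<close>

locale resilient_cool_exec = cool_exec +
  assumes n_ge: "3 * t + 1 \<le> n" and B_sub: "B \<subseteq> {1..n}" and card_B: "card B \<le> t"
    and emb_inj: "inj_on emb {1..n}" and length_W: "\<And>i. length (W i) = k"
    and tb_ok: "valid_tb tb"
begin

definition honest :: "nat set" where
  "honest = {1..n} - B"

lemma finite_honest [simp]: "finite honest"
  unfolding honest_def by simp

lemma card_honest: "card honest = n - card B"
  unfolding honest_def using B_sub by (simp add: card_Diff_subset finite_subset)

lemma card_honest_ge: "2 * t + 1 \<le> card honest"
  using card_honest n_ge card_B by linarith

lemma card_honest_filter_ge: "card {j\<in>{1..n}. P j} - card B \<le> card {j\<in>honest. P j}"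
proof -
  have "{j\<in>honest. P j} = {j\<in>{1..n}. P j} - B"
    unfolding honest_def by auto
  then show ?thesis
    using B_sub by (simp add: diff_card_le_card_Diff finite_subset)
qed

lemma card_honest_filter_ge_if_quorum:
  "n - t \<le> card {j\<in>{1..n}. P j} \<Longrightarrow> card honest - t \<le> card {j\<in>honest. P j}"
  using card_honest_filter_ge[of P] card_honest by linarith

lemma s2_imp_s1: "s2 i \<Longrightarrow> s1 i"
  unfolding s2_def by simp

lemma s3_imp_s2: "s3 i \<Longrightarrow> s2 i"
  unfolding s3_def by simp

lemma rec1_honest: "i \<in> honest \<Longrightarrow> j \<in> honest \<Longrightarrow> rec1 i j = s1 j"
  unfolding rec1_def honest_def by auto

lemma rec2_honest: "i \<in> honest \<Longrightarrow> j \<in> honest \<Longrightarrow> rec2 i j = s2 j"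
  unfolding rec2_def msg2_def using rec1_honest[of i j] s2_imp_s1[of j]
  by (auto simp: honest_def)

lemma rec3_honest: "i \<in> honest \<Longrightarrow> j \<in> honest \<Longrightarrow> rec3 i j = s3 j"
  unfolding rec3_def msg3_def using rec2_honest[of i j] s3_imp_s2[of j]
  by (auto simp: honest_def)

lemma link1_honest_iff:
  "i \<in> honest \<Longrightarrow> j \<in> honest \<Longrightarrow> link1 i j \<longleftrightarrow>
    j = i \<or> (cw emb k (W j) i = cw emb k (W i) i \<and> cw emb k (W j) j = cw emb k (W i) j)"
  unfolding link1_def recv1_def honest_def by auto

lemma link1_honest_sym:
  assumes "i \<in> honest" "j \<in> honest"
  shows "link1 i j \<longleftrightarrow> link1 j i"
  using link1_honest_iff[OF assms] link1_honest_iff[OF assms(2,1)] by auto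

lemma card_link1_ge: "i \<in> honest \<Longrightarrow> s1 i \<Longrightarrow> card honest - t \<le> card {j\<in>honest. link1 i j}"
  unfolding s1_def by (rule card_honest_filter_ge_if_quorum)

lemma card_link1_s1_ge:
  assumes "i \<in> honest" "s2 i"
  shows "card honest - t \<le> card {j\<in>honest. link1 i j \<and> s1 j}"
proof -
  have "{j\<in>honest. link2 i j} = {j\<in>honest. link1 i j \<and> s1 j}"
    using rec1_honest[OF assms(1)] unfolding link2_def by auto
  then show ?thesis
    using assms card_honest_filter_ge_if_quorum[of "link2 i"] unfolding s2_def by simp
qed

lemma card_link1_s2_ge:
  assumes "i \<in> honest" "s3 i"
  shows "card honest - t \<le> card {j\<in>honest. link1 i j \<and> s2 j}"
proof -
  have "{j\<in>honest. link3 i j} = {j\<in>honest. link1 i j \<and> s2 j}"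
    using rec1_honest[OF assms(1)] rec2_honest[OF assms(1)] s2_imp_s1
    unfolding link3_def link2_def by auto
  then show ?thesis
    using assms card_honest_filter_ge_if_quorum[of "link3 i"] unfolding s3_def by simp
qed

definition agree :: "'a list \<Rightarrow> 'a list \<Rightarrow> nat set" where
  "agree u u' = {r\<in>{1..n}. cw emb k u r = cw emb k u' r}"

lemma finite_agree [simp]: "finite (agree u u')"
  unfolding agree_def by simp

lemma card_agree_le:
  assumes "length u = k" "length u' = k" "u \<noteq> u'"
  shows "card (agree u u') \<le> t div 5"
proof -
  have "k \<le> n"
    using n_ge unfolding k_def kpar_def by linarith
  then show ?thesis
    using card_cw_agree_le[OF emb_inj _ assms] unfolding agree_def k_def kpar_def by simp
qed

definition supporters :: "'a list \<Rightarrow> nat set" where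
  "supporters u = {q\<in>honest. cw emb k (W q) q = cw emb k u q}"

lemma card_supporters_ge:
  assumes "i \<in> honest" "s1 i"
  shows "card honest - t \<le> card (supporters (W i))"
proof -
  have "{j\<in>honest. link1 i j} \<subseteq> supporters (W i)"
    using link1_honest_iff[OF assms(1)] unfolding supporters_def by auto
  then have "card {j\<in>honest. link1 i j} \<le> card (supporters (W i))"
    by (intro card_mono) (auto simp: supporters_def)
  then show ?thesis
    using card_link1_ge[OF assms] by linarith
qed

lemma card_supporters_Int_le:
  assumes "length u = k" "length u' = k" "u \<noteq> u'"
  shows "card (supporters u \<inter> supporters u') \<le> t div 5"
proof -
  have "supporters u \<inter> supporters u' \<subseteq> agree u u'"
    unfolding supporters_def agree_def honest_def by auto
  then have "card (supporters u \<inter> supporters u') \<le> card (agree u u')"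
    by (rule card_mono[OF finite_agree])
  then show ?thesis
    using card_agree_le[OF assms] by linarith
qed

lemma at_most_two_messages:
  assumes "p1 \<in> honest" "s1 p1" "p2 \<in> honest" "s1 p2" "p3 \<in> honest" "s1 p3"
  shows "W p1 = W p2 \<or> W p1 = W p3 \<or> W p2 = W p3"
proof (rule ccontr)
  assume distinct: "\<not> ?thesis"
  let ?A1 = "supporters (W p1)" and ?A2 = "supporters (W p2)" and ?A3 = "supporters (W p3)"
  have "card ?A1 + card ?A2 + card ?A3
      \<le> card (?A1 \<union> ?A2 \<union> ?A3) + card (?A1 \<inter> ?A2) + card (?A1 \<inter> ?A3) + card (?A2 \<inter> ?A3)"
    by (rule card3_le_card_Un3_add_Int) (simp_all add: supporters_def)
  moreover have "card (?A1 \<union> ?A2 \<union> ?A3) \<le> card honest"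
    by (intro card_mono) (auto simp: supporters_def)
  moreover have "card (?A1 \<inter> ?A2) \<le> t div 5" "card (?A1 \<inter> ?A3) \<le> t div 5"
      "card (?A2 \<inter> ?A3) \<le> t div 5"
    using card_supporters_Int_le length_W distinct by auto
  moreover have "card honest - t \<le> card ?A1" "card honest - t \<le> card ?A2"
      "card honest - t \<le> card ?A3"
    using card_supporters_ge assms by auto
  ultimately show False
    using card_honest_ge by linarith
qed

text \<open>A link from y to a processor holding the other message forces y into agree v v'.\<close>
lemma link1_same_message:
  assumes two: "\<forall>x\<in>honest. s1 x \<longrightarrow> W x = v \<or> W x = v'"
    and y: "y \<in> honest" "s1 y" "y \<notin> agree v v'"
    and z: "z \<in> honest" "s1 z" "link1 y z"
  shows "W z = W y"
proof (rule ccontr)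
  assume "W z \<noteq> W y"
  then have "cw emb k (W z) y = cw emb k (W y) y"
    using link1_honest_iff[OF y(1) z(1)] z(3) by auto
  moreover have "W y = v \<and> W z = v' \<or> W y = v' \<and> W z = v"
    using two y(1,2) z(1,2) \<open>W z \<noteq> W y\<close> by auto
  ultimately have "y \<in> agree v v'"
    using y(1) unfolding agree_def honest_def by auto
  with y(3) show False ..
qed

lemma card_same_message_ge:
  assumes two: "\<forall>x\<in>honest. s1 x \<longrightarrow> W x = v \<or> W x = v'"
    and card_agree: "card (agree v v') \<le> t div 5"
    and x: "x \<in> honest" "s3 x"
  shows "card honest - t \<le> card {z\<in>honest. s1 z \<and> W z = W x}"
proof -
  have "card (agree v v') < card {y\<in>honest. link1 x y \<and> s2 y}"
    using card_link1_s2_ge[OF x] card_agree card_honest_ge by linarith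
  then have "\<not> {y\<in>honest. link1 x y \<and> s2 y} \<subseteq> agree v v'"
    using card_mono[OF finite_agree] by (auto simp: not_le[symmetric])
  then obtain y where y: "y \<in> honest" "link1 x y" "s2 y" "y \<notin> agree v v'"
    by blast
  have "s1 x" "s1 y"
    using x(2) y(3) s2_imp_s1 s3_imp_s2 by auto
  have "W x = W y"
    using link1_same_message[OF two y(1) \<open>s1 y\<close> y(4) x(1) \<open>s1 x\<close>] y(2)
      link1_honest_sym[OF x(1) y(1)] by simp
  have "{z\<in>honest. link1 y z \<and> s1 z} \<subseteq> {z\<in>honest. s1 z \<and> W z = W x}"
    using link1_same_message[OF two y(1) \<open>s1 y\<close> y(4)] \<open>W x = W y\<close> by auto
  then have "card {z\<in>honest. link1 y z \<and> s1 z} \<le> card {z\<in>honest. s1 z \<and> W z = W x}"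
    by (intro card_mono) auto
  then show ?thesis
    using card_link1_s1_ge[OF y(1) y(3)] by linarith
qed

lemma s3_same_message:
  assumes i: "i \<in> honest" "s3 i" and j: "j \<in> honest" "s3 j"
  shows "W i = W j"
proof (rule ccontr)
  assume ne: "W i \<noteq> W j"
  have "s1 i" "s1 j"
    using i j s2_imp_s1 s3_imp_s2 by auto
  have two: "\<forall>x\<in>honest. s1 x \<longrightarrow> W x = W i \<or> W x = W j"
  proof (intro ballI impI)
    fix x
    assume x: "x \<in> honest" "s1 x"
    show "W x = W i \<or> W x = W j"
      using at_most_two_messages[OF i(1) \<open>s1 i\<close> j(1) \<open>s1 j\<close> x] ne by auto
  qed
  have card_agree: "card (agree (W i) (W j)) \<le> t div 5"
    using card_agree_le length_W ne by simp
  have "card ({z\<in>honest. s1 z \<and> W z = W i} \<union> {z\<in>honest. s1 z \<and> W z = W j})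
      = card {z\<in>honest. s1 z \<and> W z = W i} + card {z\<in>honest. s1 z \<and> W z = W j}"
    using ne by (intro card_Un_disjoint) auto
  moreover have "card ({z\<in>honest. s1 z \<and> W z = W i} \<union> {z\<in>honest. s1 z \<and> W z = W j})
      \<le> card honest"
    by (intro card_mono) auto
  ultimately show False
    using card_same_message_ge[OF two card_agree i] card_same_message_ge[OF two card_agree j]
      card_honest_ge by linarith
qed

lemma card_s3_ge_if_vote:
  assumes "i \<in> honest" "vote i"
  shows "t + 1 \<le> card {j\<in>honest. s3 j}"
proof -
  have "{j\<in>honest. rec3 i j} = {j\<in>honest. s3 j}"
    using rec3_honest[OF assms(1)] by auto
  then show ?thesis
    using assms(2) card_honest_filter_ge[of "rec3 i"] card_B unfolding vote_def by simp
qed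

lemma modes_singleton:
  assumes "\<And>v. v \<noteq> c \<Longrightarrow> freq i v < freq i c"
  shows "modes i = {c}"
proof -
  have "0 < freq i c"
    using assms[of "c + 1"] by simp \<comment> \<open>c + 1 is merely some value other than c\<close>
  then have "{j\<in>S1view i. fst (recv1 i j) = c} \<noteq> {}"
    unfolding freq_def by (intro notI) simp
  then have "\<exists>j\<in>S1view i. fst (recv1 i j) = c"
    by blast
  moreover have "freq i v \<le> freq i c" for v
    using assms[of v] by (cases "v = c") auto
  moreover have "v = c" if "freq i c \<le> freq i v" for v
    using assms[of v] that by (cases "v = c") auto
  ultimately show ?thesis
    unfolding modes_def by blast
qed

context
  fixes u :: "'a list"
  assumes s3_W: "\<And>j. j \<in> honest \<Longrightarrow> s3 j \<Longrightarrow> W j = u"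
    and card_s3: "t + 1 \<le> card {j\<in>honest. s3 j}"
begin

lemma ynew_eq_cw:
  assumes i: "i \<in> honest"
  shows "ynew i = cw emb k u i"
proof -
  let ?c = "cw emb k u i"
  have "{j\<in>honest. s3 j} \<subseteq> {j\<in>S1view i. fst (recv1 i j) = ?c}"
    using rec3_honest[OF i] s3_W unfolding S1view_def recv1_def honest_def by auto
  then have "card {j\<in>honest. s3 j} \<le> freq i ?c"
    unfolding freq_def by (intro card_mono) (auto simp: S1view_def)
  moreover have "freq i v \<le> t" if "v \<noteq> ?c" for v
  proof -
    have "{j\<in>S1view i. fst (recv1 i j) = v} \<subseteq> B"
      using rec3_honest[OF i] s3_W that unfolding S1view_def recv1_def honest_def by auto
    then have "freq i v \<le> card B"
      unfolding freq_def by (intro card_mono) (use B_sub finite_subset in auto)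
    then show ?thesis
      using card_B by linarith
  qed
  ultimately have "freq i v < freq i ?c" if "v \<noteq> ?c" for v
    using card_s3 that by fastforce
  then have "modes i = {?c}"
    by (rule modes_singleton)
  then show ?thesis
    using tb_ok unfolding ynew_def valid_tb_def by auto
qed

lemma zvec_eq_cw:
  assumes i: "i \<in> honest" "\<not> s3 i" and j: "j \<in> honest"
  shows "zvec i j = cw emb k u j"
proof -
  consider "j = i" | "j \<noteq> i" "s3 j" | "j \<noteq> i" "\<not> s3 j"
    by blast
  then show ?thesis
  proof cases
    case 1
    then show ?thesis
      using ynew_eq_cw[OF i(1)] unfolding zvec_def by simp
  next
    case 2
    then show ?thesis
      using rec3_honest[OF i(1) j] s3_W[OF j] j unfolding zvec_def recv1_def honest_def by simp
  next
    case 3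
    then show ?thesis
      using rec3_honest[OF i(1) j] rec3_honest[OF j i(1)] ynew_eq_cw[OF j] i(2) j
      unfolding zvec_def recv4_def honest_def by simp
  qed
qed

lemma cool_output_eq_Some:
  assumes dec: "valid_decoder emb n t dec" and d and i: "i \<in> honest"
  shows "cool_output d dec i = Some u"
proof (cases "s3 i")
  case True
  then show ?thesis
    using \<open>d\<close> s3_W[OF i] unfolding cool_output_def by simp
next
  case False
  have "honest \<subseteq> {j\<in>{1..n}. cw emb (kpar t) u j = zvec i j}"
    using zvec_eq_cw[OF i False] unfolding honest_def k_def by auto
  then have "card honest \<le> card {j\<in>{1..n}. cw emb (kpar t) u j = zvec i j}"
    by (intro card_mono) auto
  then have "n - t \<le> card {j\<in>{1..n}. cw emb (kpar t) u j = zvec i j}"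
    using card_honest card_B by linarith
  moreover have "length u = kpar t"
  proof -
    have "{j\<in>honest. s3 j} \<noteq> {}"
      using card_s3 by (intro notI) simp
    then show ?thesis
      using s3_W length_W unfolding k_def by auto
  qed
  ultimately have "dec i (zvec i) = Some u"
    using valid_decoder_unique[OF dec emb_inj n_ge] by simp
  then show ?thesis
    using \<open>d\<close> False unfolding cool_output_def by simp
qed

end

lemma cool_output_consistent:
  assumes dec: "valid_decoder emb n t dec"
    and ba_valid0: "(\<forall>i\<in>honest. \<not> vote i) \<longrightarrow> \<not> d"
    and i: "i \<in> honest" and j: "j \<in> honest"
  shows "cool_output d dec i = cool_output d dec j"
proof (cases d)
  case False
  then show ?thesis
    unfolding cool_output_def by simp
next
  case True
  then obtain i0 where "i0 \<in> honest" "vote i0"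
    using ba_valid0 by blast
  then have card_s3: "t + 1 \<le> card {j\<in>honest. s3 j}"
    by (rule card_s3_ge_if_vote)
  then have "{j\<in>honest. s3 j} \<noteq> {}"
    by (intro notI) simp
  then obtain i1 where "i1 \<in> honest" "s3 i1"
    by blast
  then have same: "W j = W i1" if "j \<in> honest" "s3 j" for j
    using s3_same_message that by blast
  have "cool_output d dec j = Some (W i1)" if "j \<in> honest" for j
    by (rule cool_output_eq_Some[where u = "W i1", OF same card_s3 dec True that])
  then show ?thesis
    using i j by simp
qed

end

theorem lemma4:
  fixes n t l :: nat
    and emb :: "nat \<Rightarrow> 'f::{field,finite}"
    and b2f :: "bool list \<Rightarrow> 'f"
    and B :: "nat set"
    and w :: "nat \<Rightarrow> bool list"
    and adv :: "'f adversary"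
    and dflt :: 'f
    and tb :: "'f set \<Rightarrow> 'f"
    and dec :: "nat \<Rightarrow> (nat \<Rightarrow> 'f) \<Rightarrow> 'f list option"
    and d :: bool
  defines "W \<equiv> (\<lambda>i. encode_msg b2f (kpar t) (cpar n t l) (w i))"
  assumes n_ge: "n \<ge> 3 * t + 1"
    and field_card: "card (UNIV :: 'f set) = 2 ^ cpar n t l"
    and emb_inj: "inj_on emb {1..n}"
    and emb_nz: "\<forall>i\<in>{1..n}. emb i \<noteq> 0"
    and b2f_bij: "bij_betw b2f {xs. length xs = cpar n t l} UNIV"
    and B_sub: "B \<subseteq> {1..n}"
    and B_card: "card B \<le> t"
    and msg_len: "\<forall>i\<in>{1..n}. length (w i) = l"
    and tb_ok: "valid_tb tb"
    and dec_ok: "valid_decoder emb n t dec"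
    and ba_valid1: "(\<forall>i\<in>{1..n} - B. cool_exec.vote n t emb B W adv i) \<longrightarrow> d"
    and ba_valid0: "(\<forall>i\<in>{1..n} - B. \<not> cool_exec.vote n t emb B W adv i) \<longrightarrow> \<not> d"
  shows "\<forall>i\<in>{1..n} - B. \<forall>j\<in>{1..n} - B.
           cool_exec.cool_output n t emb B W adv dflt tb d dec i =
           cool_exec.cool_output n t emb B W adv dflt tb d dec j"
proof -
  have "length (W i) = cool_exec.k t" for i
    unfolding W_def encode_msg_def cool_exec.k_def by simp
  then interpret resilient_cool_exec n t emb B W adv dflt tb
    using n_ge B_sub B_card emb_inj tb_ok by unfold_locales auto
  have "(\<forall>i\<in>honest. \<not> vote i) \<longrightarrow> \<not> d"
    using ba_valid0 unfolding honest_def .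
  then show ?thesis
    using cool_output_consistent[OF dec_ok] unfolding honest_def by blast
qed

end
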